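(* For integers $d\ge 0$ and $n\ge 0$, let $F_{d,n}=E_\infty(\mu_{d,n})$, where $\mu_{d,n}=\sum_{i=1}^n\delta_{v_{j(i)}}$ for an orthonormal basis $v_1,\dots,v_{d+1}$ of $\mathbf{R}^{d+1}$ and $j(i)\in\{1,\dots,d+1\}$ with $j(i)\equiv i\pmod{d+1}$ (so $F_{d,n}$ equals the number of pairs $1\le i<i'\le n$ with $i\not\equiv i'\pmod{d+1}$). For integers $d\ge1$ and $0\le k\le n$, let $F_{d,n,k}=E_\infty(\nu_{d,n,k})$, where, for a unit vector $p\in\mathbf{R}^{d+1}$ and an orthonormal basis $w_1,\dots,w_d$ of $V=p^\perp$, $\nu_{d,n,k}=(n-k)\delta_p+\sum_{i=1}^k\delta_{w_{j(i)}}$ with $j(i)\in\{1,\dots,d\}$ and $j(i)\equiv i\pmod d$. If $n-1\ge d\ge1$ and $\frac{dn}{d+1}\le k\le n-1$, then $$F_{d,n-k}+F_{d-1,n}<F_{d,n,k},\qquad F_{d,n,k}>F_{d,n,k+1},$$ and moreover $F_{d,n,\lfloor dn/(d+1)\rfloor}=F_{d,n,\lceil dn/(d+1)\rceil}$.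
   Context: Define $\Lambda^\infty(x,y)=1$ if $x\cdot y=0$ and $0$ otherwise, for unit vectors $x,y$, and for a finite nonnegative measure $\mu$ on the unit sphere, $E_\infty(\mu)=\frac12\iint\Lambda^\infty(x,y)\,d\mu(x)\,d\mu(y)$; for $\mu=\sum_i\delta_{x_i}$ this is the number of unordered pairs of indices $\{i,i'\}$ with $x_i\cdot x_{i'}=0$. The quantities $F_{d,n}$ and $F_{d,n,k}$ do not depend on the choice of bases, $p$, by rotation invariance. *)

theory Defs
  imports Complex_Main
begin

text \<open>Vectors of R^m are represented as functions nat => real; only coordinates 0..m-1 matter.\<close>

definition dotp :: "nat \<Rightarrow> (nat \<Rightarrow> real) \<Rightarrow> (nat \<Rightarrow> real) \<Rightarrow> real" where
  "dotp m x y = (\<Sum>i<m. x i * y i)"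

definition ebas :: "nat \<Rightarrow> nat \<Rightarrow> real" where
  "ebas j = (\<lambda>i. if i = j then 1 else 0)"

text \<open>E_infinity of the atomic measure sum_i delta_{x_i}, for the point list xs in R^m:
  the number of unordered index pairs {i,i'} with x_i . x_i' = 0.\<close>
definition Einf :: "nat \<Rightarrow> (nat \<Rightarrow> real) list \<Rightarrow> nat" where
  "Einf m xs = card {(i, i'). i < i' \<and> i' < length xs \<and> dotp m (xs ! i) (xs ! i') = 0}"

text \<open>F_{d,n}: orthonormal basis e_0..e_d of R^{d+1}; point i (1<=i<=n) is e_{i mod (d+1)}
  (a relabelling of the basis, j(i) = i mod (d+1)).\<close>
definition F :: "nat \<Rightarrow> nat \<Rightarrow> nat" where
  "F d n = Einf (d + 1) (map (\<lambda>i. ebas (i mod (d + 1))) [1..<n + 1])"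

text \<open>F_{d,n,k}: p = e_d in R^{d+1}, orthonormal basis e_0..e_{d-1} of p^perp;
  measure (n-k) delta_p + sum_{i=1}^k delta_{e_{i mod d}}.\<close>
definition Fk :: "nat \<Rightarrow> nat \<Rightarrow> nat \<Rightarrow> nat" where
  "Fk d n k = Einf (d + 1) (replicate (n - k) (ebas d) @ map (\<lambda>i. ebas (i mod d)) [1..<k + 1])"

end

theory Submission
  imports Defs
begin

text \<open>Distinct standard basis vectors are orthogonal and equal ones are not, so both energies
  count the index pairs carrying different labels. For the labels \<open>i mod m\<close> of the indices
  below \<open>N\<close> this count is \<open>incongruent_pairs m N\<close>, since exactly \<open>j div m\<close> of the
  indices below \<open>j\<close> share the label of \<open>j\<close>. Hence \<open>F d n = incongruent_pairs (d + 1) n\<close>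
  and, as each of the \<open>n - k\<close> copies of \<open>p\<close> is orthogonal to the \<open>k\<close> points of its
  orthogonal complement, \<open>Fk d n k = (n - k) * k + incongruent_pairs d k\<close>. Consequently
  \<open>Fk d n (k + 1) + k div d + 1 = Fk d n k + (n - k)\<close>. The hypothesis \<open>dn/(d+1) \<le> k\<close> means
  \<open>n - k \<le> k div d\<close>, so \<open>Fk d n\<close> decreases strictly there, while for
  \<open>k = dn div (d+1)\<close> with \<open>d + 1\<close> not dividing \<open>dn\<close> one has \<open>n - k = k div d + 1\<close>
  and the two values agree. For the first inequality put \<open>a = n - k\<close>: the labels \<open>k + t\<close>
  (\<open>t < a\<close>) add at most \<open>k - a + t\<close> each to \<open>F (d - 1) n\<close> beyond
  \<open>incongruent_pairs d k\<close>, and \<open>F d a \<le> a(a - 1)/2\<close>, in total at most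
  \<open>a * k - a < a * k\<close>.\<close>

lemma card_ordered_pairs_eq_sum:
  fixes N :: nat
  shows "card {(i, j). i < j \<and> j < N \<and> R i j} = (\<Sum>j<N. card {i. i < j \<and> R i j})"
proof (induction N)
  case (Suc N)
  let ?P = "{(i, j). i < j \<and> j < N \<and> R i j}" and ?Q = "{i. i < N \<and> R i N}"
  have "{(i, j). i < j \<and> j < Suc N \<and> R i j} = ?P \<union> (\<lambda>i. (i, N)) ` ?Q"
    by (auto simp: less_Suc_eq)
  moreover have "finite ?P"
    by (rule finite_subset[of _ "{..<N} \<times> {..<N}"]) auto
  ultimately have "card {(i, j). i < j \<and> j < Suc N \<and> R i j} = card ?P + card ((\<lambda>i. (i, N)) ` ?Q)"
    by (simp only:) (rule card_Un_disjoint, auto)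
  also have "card ((\<lambda>i. (i, N)) ` ?Q) = card ?Q"
    by (rule card_image) (simp add: inj_on_def)
  finally show ?case
    using Suc by simp
qed simp

lemma dotp_ebas: "a < m \<Longrightarrow> b < m \<Longrightarrow> dotp m (ebas a) (ebas b) = (if a = b then 1 else 0)"
  by (simp add: dotp_def ebas_def if_distrib if_distribR sum.If_cases)

lemma card_less_cong_mod:
  assumes "0 < m"
  shows "card {i. i < j \<and> i mod m = j mod m} = j div m"
proof -
  have "{i. i < j \<and> i mod m = j mod m} = (\<lambda>q. q * m + j mod m) ` {..<j div m}"
  proof (intro set_eqI iffI)
    fix i assume "i \<in> {i. i < j \<and> i mod m = j mod m}"
    then have i: "i < j" "i mod m = j mod m"
      by simp_all
    have "i div m < j div m"
    proof (rule ccontr)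
      assume "\<not> i div m < j div m"
      then have "j div m * m \<le> i div m * m"
        by (simp add: mult_le_mono1)
      then have "j \<le> i"
        using i div_mult_mod_eq[of i m] div_mult_mod_eq[of j m] by linarith
      then show False
        using i by simp
    qed
    moreover have "i = i div m * m + j mod m"
      using i(2) div_mult_mod_eq[of i m] by simp
    ultimately show "i \<in> (\<lambda>q. q * m + j mod m) ` {..<j div m}"
      by blast
  next
    fix i assume "i \<in> (\<lambda>q. q * m + j mod m) ` {..<j div m}"
    then obtain q where q: "q < j div m" "i = q * m + j mod m"
      by auto
    have "q * m + m \<le> j div m * m"
      using mult_le_mono1[of "Suc q" "j div m" m] q by simp
    then have "i < j"
      using q assms div_mult_mod_eq[of j m] mod_less_divisor[OF assms, of j] by linarith
    moreover have "i mod m = j mod m"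
      using q by simp
    ultimately show "i \<in> {i. i < j \<and> i mod m = j mod m}"
      by simp
  qed
  moreover have "inj_on (\<lambda>q. q * m + j mod m) {..<j div m}"
    using assms by (simp add: inj_on_def)
  ultimately show ?thesis by (simp add: card_image)
qed

lemma card_less_Suc_incong_mod:
  assumes "0 < m"
  shows "card {i. i < j \<and> Suc i mod m \<noteq> Suc j mod m} = j - j div m"
proof -
  have "{i. i < j \<and> Suc i mod m \<noteq> Suc j mod m} = {..<j} - {i. i < j \<and> i mod m = j mod m}"
    by (auto simp: nat_mod_eq_iff)
  also have "card ({..<j} - {i. i < j \<and> i mod m = j mod m}) = j - card {i. i < j \<and> i mod m = j mod m}"
    by (subst card_Diff_subset) auto
  finally show ?thesis
    using card_less_cong_mod[OF assms] by simp
qed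

lemma Einf_map_ebas:
  assumes "\<And>i. i < N \<Longrightarrow> f i < m"
  shows "Einf m (map (\<lambda>i. ebas (f i)) [0..<N]) = (\<Sum>j<N. card {i. i < j \<and> f i \<noteq> f j})"
proof -
  let ?xs = "map (\<lambda>i. ebas (f i)) [0..<N]"
  have "{(i, j). i < j \<and> j < length ?xs \<and> dotp m (?xs ! i) (?xs ! j) = 0}
      = {(i, j). i < j \<and> j < N \<and> f i \<noteq> f j}"
    using assms by (auto simp: dotp_ebas)
  then show ?thesis
    by (simp only: Einf_def card_ordered_pairs_eq_sum)
qed

definition incongruent_pairs :: "nat \<Rightarrow> nat \<Rightarrow> nat" where
  "incongruent_pairs m N = (\<Sum>j<N. j - j div m)"

lemma F_eq_incongruent_pairs: "F d n = incongruent_pairs (d + 1) n"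
proof -
  have "map (\<lambda>i. ebas (i mod (d + 1))) [1..<n + 1] = map (\<lambda>i. ebas (Suc i mod (d + 1))) [0..<n]"
    by (simp del: upt_Suc flip: map_Suc_upt add: comp_def)
  then show ?thesis
    unfolding F_def incongruent_pairs_def
    by (simp add: Einf_map_ebas card_less_Suc_incong_mod del: upt_Suc)
qed

lemma sum_lessThan_add_nat: "(\<Sum>j<a + b. f j) = (\<Sum>j<a. f j) + (\<Sum>t<b. f (a + t))"
  for a b :: nat
  by (induction b) (simp_all add: add.assoc)

lemma Fk_eq_incongruent_pairs:
  assumes "0 < d" and "k \<le> n"
  shows "Fk d n k = (n - k) * k + incongruent_pairs d k"
proof -
  define a where "a = n - k"
  define g where "g i = (if i < a then d else Suc (i - a) mod d)" for i
  have "replicate a (ebas d) @ map (\<lambda>i. ebas (i mod d)) [1..<k + 1] = map (\<lambda>i. ebas (g i)) [0..<a + k]"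
    by (rule nth_equalityI) (auto simp: nth_append g_def simp del: upt_Suc)
  moreover have "g i < d + 1" for i
    unfolding g_def using assms(1) by (simp add: less_SucI)
  ultimately have "Fk d n k = (\<Sum>j<a + k. card {i. i < j \<and> g i \<noteq> g j})"
    unfolding Fk_def a_def by (simp add: Einf_map_ebas del: upt_Suc)
  also have "\<dots> = (\<Sum>t<k. a + (t - t div d))"
  proof -
    have "{i. i < j \<and> g i \<noteq> g j} = {}" if "j < a" for j
      using that by (auto simp: g_def)
    moreover have "{i. i < a + t \<and> g i \<noteq> g (a + t)}
        = {..<a} \<union> (+) a ` {s. s < t \<and> Suc s mod d \<noteq> Suc t mod d}" for t
    proof (intro set_eqI iffI)
      fix i assume "i \<in> {i. i < a + t \<and> g i \<noteq> g (a + t)}"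
      then show "i \<in> {..<a} \<union> (+) a ` {s. s < t \<and> Suc s mod d \<noteq> Suc t mod d}"
        by (cases "i < a") (auto simp: g_def image_iff intro: exI[of _ "i - a"])
    qed (use mod_less_divisor[OF assms(1), of "Suc t"] in \<open>auto simp: g_def\<close>)
    moreover have "card ({..<a} \<union> (+) a ` {s. s < t \<and> Suc s mod d \<noteq> Suc t mod d}) = a + (t - t div d)" for t
      using card_less_Suc_incong_mod[OF assms(1)]
      by (subst card_Un_disjoint) (auto simp: card_image)
    ultimately show ?thesis
      by (simp add: sum_lessThan_add_nat)
  qed
  also have "\<dots> = (\<Sum>t<k. a) + incongruent_pairs d k"
    by (simp only: sum.distrib incongruent_pairs_def)
  finally show ?thesis
    by (simp add: a_def)
qed

lemma Fk_Suc:
  assumes "0 < d" and "k < n"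
  shows "Fk d n (Suc k) + Suc (k div d) = Fk d n k + (n - k)"
proof -
  obtain b where b: "n - k = Suc b"
    using assms(2) by (metis Suc_diff_Suc)
  have "incongruent_pairs d (Suc k) = incongruent_pairs d k + (k - k div d)"
    by (simp add: incongruent_pairs_def del: add_diff_assoc)
  moreover have "n - Suc k = b"
    using b by simp
  ultimately have "Fk d n (Suc k) = b + b * k + incongruent_pairs d k + (k - k div d)"
    using Fk_eq_incongruent_pairs[OF assms(1), of "Suc k" n] assms(2) by (simp del: add_diff_assoc)
  moreover have "Fk d n k = k + b * k + incongruent_pairs d k"
    using Fk_eq_incongruent_pairs[OF assms(1), of k n] assms(2) b by simp
  moreover have "k div d \<le> k"
    by simp
  ultimately show ?thesis
    using b by linarith
qed

lemma Fk_Suc_less: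
  assumes "0 < d" and "k < n" and "n - k \<le> k div d"
  shows "Fk d n (Suc k) < Fk d n k"
  using Fk_Suc[OF assms(1,2)] assms(3) by linarith

lemma F_add_F_less_Fk:
  assumes "0 < d" and "k < n" and "n - k \<le> k div d"
  shows "F d (n - k) + F (d - 1) n < Fk d n k"
proof -
  define a where "a = n - k"
  have "a \<le> k"
    unfolding a_def using assms(3) div_le_dividend by (rule le_trans)
  have "F d a \<le> (\<Sum>t<a. t)"
    unfolding F_eq_incongruent_pairs incongruent_pairs_def by (rule sum_mono) simp
  moreover have "F (d - 1) n \<le> incongruent_pairs d k + (\<Sum>t<a. (k - a) + t)"
  proof -
    have "(k + t) - (k + t) div d \<le> (k - a) + t" for t
      using div_le_mono[of k "k + t" d] assms(3) \<open>a \<le> k\<close> by (simp add: a_def)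
    then have "(\<Sum>t<a. (k + t) - (k + t) div d) \<le> (\<Sum>t<a. (k - a) + t)"
      by (intro sum_mono)
    moreover have "n = k + a"
      using assms(2) by (simp add: a_def)
    ultimately show ?thesis
      using assms(1) by (simp add: F_eq_incongruent_pairs incongruent_pairs_def sum_lessThan_add_nat)
  qed
  moreover have "2 * (\<Sum>t<a. t) + a = a * a"
    by (induction a) simp_all
  moreover have "Fk d n k = a * k + incongruent_pairs d k"
    using Fk_eq_incongruent_pairs[OF assms(1), of k n] assms(2) by (simp add: a_def)
  moreover have "0 < a" "a * k = a * (k - a) + a * a"
    using assms(2) \<open>a \<le> k\<close> by (simp_all add: a_def flip: add_mult_distrib2)
  moreover have "(\<Sum>t<a. (k - a) + t) = a * (k - a) + (\<Sum>t<a. t)"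
    by (simp add: sum.distrib)
  ultimately show ?thesis
    unfolding a_def[symmetric] by linarith
qed

lemma Fk_Suc_div_eq:
  assumes "0 < d" and "\<not> (d + 1) dvd d * n"
  shows "Fk d n (Suc (d * n div (d + 1))) = Fk d n (d * n div (d + 1))"
proof -
  define k where "k = d * n div (d + 1)"
  define r where "r = d * n mod (d + 1)"
  have r: "0 < r" "r \<le> d"
    using assms(2) mod_less_divisor[of "d + 1" "d * n"] by (auto simp: r_def dvd_eq_mod_eq_0)
  have dn: "k * (d + 1) + r = d * n"
    unfolding k_def r_def by (rule div_mult_mod_eq)
  have "k < n"
  proof -
    have "0 < n"
      using assms(2) by (auto intro: Nat.gr0I)
    then have "k * (d + 1) < n * (d + 1)"
      using dn r(2) by (simp add: algebra_simps)
    then show ?thesis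
      using mult_less_cancel2 by blast
  qed
  then obtain c where c: "n - k = Suc c"
    by (metis Suc_diff_Suc)
  have "k + r = d * Suc c"
    using dn c by (simp add: algebra_simps diff_mult_distrib2 flip: c)
  then have "k = c * d + (d - r)"
    using r by (simp add: algebra_simps)
  then have "k div d = c"
    using r assms(1) by (simp del: add_diff_assoc)
  then show ?thesis
    using Fk_Suc[OF assms(1) \<open>k < n\<close>] c by (simp add: k_def)
qed

lemma nat_ceiling_divide_of_nat:
  assumes "0 < q"
  shows "nat \<lceil>real m / real q\<rceil> = (if q dvd m then m div q else Suc (m div q))"
proof -
  have "\<lceil>real m / real q\<rceil> = - (- int m div int q)"
    using ceiling_divide_eq_div[of "int m" "int q"] by simp
  also have "\<dots> = (if int q dvd int m then int m div int q else int m div int q + 1)"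
    using assms by (simp add: zdiv_zminus1_eq_if dvd_eq_mod_eq_0)
  finally show ?thesis
    by (simp add: nat_add_distrib flip: zdiv_int)
qed

theorem lemma2p3:
  fixes d n k :: nat
  assumes "1 \<le> d" and "d \<le> n - 1"
    and "real d * real n / real (d + 1) \<le> real k" and "k \<le> n - 1"
  shows "F d (n - k) + F (d - 1) n < Fk d n k
    \<and> Fk d n k > Fk d n (k + 1)
    \<and> Fk d n (nat \<lfloor>real d * real n / real (d + 1)\<rfloor>)
        = Fk d n (nat \<lceil>real d * real n / real (d + 1)\<rceil>)"
proof -
  have d: "0 < d" and "k < n"
    using assms(1,2,4) by auto
  have "real (d * n) \<le> real (k * (d + 1))"
    using assms(3) by (simp add: pos_divide_le_eq algebra_simps)
  then have "(n - k) * d \<le> k"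
    by (simp only: of_nat_le_iff) (simp add: diff_mult_distrib algebra_simps)
  then have bound: "n - k \<le> k div d"
    by (simp add: less_eq_div_iff_mult_less_eq[OF d])
  have "nat \<lfloor>real d * real n / real (d + 1)\<rfloor> = d * n div (d + 1)"
    using floor_divide_of_nat_eq[of "d * n" "d + 1", where 'a = real] by simp
  moreover have "nat \<lceil>real d * real n / real (d + 1)\<rceil>
      = (if (d + 1) dvd d * n then d * n div (d + 1) else Suc (d * n div (d + 1)))"
    using nat_ceiling_divide_of_nat[of "d + 1" "d * n"] by simp
  ultimately have "Fk d n (nat \<lfloor>real d * real n / real (d + 1)\<rfloor>)
      = Fk d n (nat \<lceil>real d * real n / real (d + 1)\<rceil>)"
    using Fk_Suc_div_eq[OF d, of n] by auto
  moreover have "Fk d n (k + 1) < Fk d n k"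
    using Fk_Suc_less[OF d \<open>k < n\<close> bound] by simp
  ultimately show ?thesis
    using F_add_F_less_Fk[OF d \<open>k < n\<close> bound] by blast
qed

end
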